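(* Suppose that $G$ is a finite solvable group acted on by automorphisms by an elementary abelian $p$-group $A$ with $|A|\geq p^3$. If this action is good and $C_G(a)$ is abelian for every nonidentity $a\in A$, then $G$ is abelian.
   Context: If a group $A$ acts on a group $G$ by automorphisms, the action is called good if $H=[H,B]C_H(B)$ for every subgroup $B\le A$ and every $B$-invariant subgroup $H\le G$. *)

theory Defs
  imports "HOL-Algebra.Algebra"
begin

definition fixed_points ::
  "('a, 'c) monoid_scheme \<Rightarrow> ('b \<Rightarrow> 'a \<Rightarrow> 'a) \<Rightarrow> 'b set \<Rightarrow> 'a set \<Rightarrow> 'a set" where
  "fixed_points G phi B H = {h \<in> H. \<forall>b \<in> B. phi b h = h}"

definition action_commutator ::
  "('a, 'c) monoid_scheme \<Rightarrow> ('b \<Rightarrow> 'a \<Rightarrow> 'a) \<Rightarrow> 'a set \<Rightarrow> 'b set \<Rightarrow> 'a set" where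
  "action_commutator G phi H B =
     generate G {inv\<^bsub>G\<^esub> h \<otimes>\<^bsub>G\<^esub> phi b h | h b. h \<in> H \<and> b \<in> B}"

definition good_action ::
  "('a, 'c) monoid_scheme \<Rightarrow> ('b, 'd) monoid_scheme \<Rightarrow> ('b \<Rightarrow> 'a \<Rightarrow> 'a) \<Rightarrow> bool" where
  "good_action G A phi \<longleftrightarrow>
     (\<forall>B H. subgroup B A \<longrightarrow> subgroup H G \<longrightarrow> (\<forall>b \<in> B. phi b ` H \<subseteq> H) \<longrightarrow>
        H = action_commutator G phi H B <#>\<^bsub>G\<^esub> fixed_points G phi B H)"

end

theory Submission
  imports Defs
begin

(* Let C = centralizer_hull be the subgroup generated by the centralizers C_G(B) of the
   subgroups B of index at most p in A. Since |A| >= p^3, any two such B share an element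
   a <> 1, so any two generators of C lie in the abelian group C_G(a) and C is abelian. It
   remains to show that every A-invariant subgroup H lies in C, by induction on H. If the kernel
   of A on H has index at most p, then H lies in one of the generating centralizers. Otherwise
   there are a, b such that b and all a b^j (j < p) act nontrivially on H. For each such x,
   goodness H = [H,x] C_H(x) and the induction hypothesis force [H,x] = H, so x acts
   fixed-point-freely on the abelian group H/H'. Multiplying the norms of an element under the
   subgroups <a b^j> shows that H/H' has exponent p, whereas the orbits of <b> on its
   nonidentity elements all have length p; hence H/H' = 1, and the perfect subgroup H of the
   solvable group G is trivial. *)

definition centralizer :: "('a, 'c) monoid_scheme \<Rightarrow> 'a set \<Rightarrow> 'a set" where
  "centralizer G S = {u \<in> carrier G. \<forall>y\<in>S. u \<otimes>\<^bsub>G\<^esub> y = y \<otimes>\<^bsub>G\<^esub> u}"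

lemma (in group) subgroup_centralizer:
  assumes "S \<subseteq> carrier G"
  shows "subgroup (centralizer G S) G"
proof
  fix g h assume g: "g \<in> centralizer G S" and h: "h \<in> centralizer G S"
  show "g \<otimes> h \<in> centralizer G S"
  proof -
    have "g \<otimes> h \<otimes> x = x \<otimes> (g \<otimes> h)" if x: "x \<in> S" for x
    proof -
      have xG: "x \<in> carrier G"
        using x assms by blast
      have "g \<otimes> h \<otimes> x = g \<otimes> (x \<otimes> h)"
        using g h x xG by (simp add: centralizer_def m_assoc)
      also have "\<dots> = x \<otimes> (g \<otimes> h)"
        using g h x xG by (simp add: centralizer_def m_assoc[symmetric])
      finally show ?thesis .
    qed
    then show ?thesis
      using g h by (simp add: centralizer_def)
  qed
  show "inv g \<in> centralizer G S"
  proof -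
    have "inv g \<otimes> x = x \<otimes> inv g" if x: "x \<in> S" for x
    proof -
      have xG: "x \<in> carrier G" and gx: "g \<otimes> x = x \<otimes> g" and gG: "g \<in> carrier G"
        using x assms g by (auto simp: centralizer_def)
      have "inv g \<otimes> x = inv g \<otimes> (x \<otimes> g) \<otimes> inv g"
        using xG gG by (simp add: m_assoc)
      also have "\<dots> = x \<otimes> inv g"
        using xG gG by (simp add: gx[symmetric] m_assoc[symmetric])
      finally show ?thesis .
    qed
    then show ?thesis
      using g by (simp add: centralizer_def)
  qed
qed (auto simp: centralizer_def subsetD[OF assms])

lemma (in group) generate_commute:
  assumes S: "S \<subseteq> carrier G" and comm: "\<And>s t. s \<in> S \<Longrightarrow> t \<in> S \<Longrightarrow> s \<otimes> t = t \<otimes> s"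
    and u: "u \<in> generate G S" and v: "v \<in> generate G S"
  shows "u \<otimes> v = v \<otimes> u"
proof -
  have "generate G S \<subseteq> centralizer G S"
    using S comm by (intro generate_subgroup_incl subgroup_centralizer) (auto simp: centralizer_def)
  then have "S \<subseteq> centralizer G (generate G S)"
    using S by (auto simp: centralizer_def)
  then have "generate G S \<subseteq> centralizer G (generate G S)"
    by (intro generate_subgroup_incl subgroup_centralizer generate_incl[OF S])
  then show ?thesis
    using u v by (auto simp: centralizer_def)
qed

lemma (in group) subgroups_inter_nontrivial:
  assumes fin: "finite (carrier G)" and H: "subgroup H G" and K: "subgroup K G"
    and card: "card (carrier G) < card H * card K"
  shows "\<exists>x\<in>H \<inter> K. x \<noteq> \<one>"
proof (rule ccontr)
  assume "\<not> ?thesis"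
  then have trivial: "x \<in> H \<Longrightarrow> x \<in> K \<Longrightarrow> x = \<one>" for x
    by blast
  have HG: "H \<subseteq> carrier G" and KG: "K \<subseteq> carrier G"
    using H K subgroup.subset by auto
  have "inj_on (\<lambda>(h, k). h \<otimes> k) (H \<times> K)"
  proof (rule inj_onI, clarify)
    fix h k h' k' assume h: "h \<in> H" "h' \<in> H" and k: "k \<in> K" "k' \<in> K" and eq: "h \<otimes> k = h' \<otimes> k'"
    have G: "h \<in> carrier G" "h' \<in> carrier G" "k \<in> carrier G" "k' \<in> carrier G"
      using h k HG KG by auto
    have "inv h' \<otimes> h = inv h' \<otimes> (h \<otimes> k) \<otimes> inv k"
      using G by (simp add: m_assoc)
    also have "\<dots> = k' \<otimes> inv k"
      using G by (simp add: eq m_assoc[symmetric])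
    finally have "inv h' \<otimes> h = k' \<otimes> inv k" .
    moreover have "inv h' \<otimes> h \<in> H" "k' \<otimes> inv k \<in> K"
      using h k H K by (auto intro: subgroup.m_closed subgroup.m_inv_closed)
    ultimately have "inv h' \<otimes> h = \<one>" "k' \<otimes> inv k = \<one>"
      using trivial by auto
    then show "h = h' \<and> k = k'"
      using G inv_solve_left[of \<one> h' h] inv_solve_right[of \<one> k' k] by simp
  qed
  moreover have "(\<lambda>(h, k). h \<otimes> k) ` (H \<times> K) \<subseteq> carrier G"
    using HG KG by auto
  ultimately have "card (H \<times> K) \<le> card (carrier G)"
    using fin by (intro card_inj_on_le) auto
  then show False
    using card by (simp add: card_cartesian_product)
qed

lemma (in group) exists_translates_outside_subgroup:
  assumes fin: "finite (carrier G)" and T: "subgroup T G"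
    and card: "n * card T < card (carrier G)" and n: "0 < n"
  obtains a b where "a \<in> carrier G" "b \<in> carrier G" "b \<notin> T" "\<And>j. j < n \<Longrightarrow> a \<otimes> b [^] j \<notin> T"
proof -
  have TG: "T \<subseteq> carrier G"
    using T subgroup.subset by auto
  have finT: "finite T"
    using TG fin by (rule finite_subset)
  have "card T \<le> n * card T"
    using n by simp
  then have "\<not> carrier G \<subseteq> T"
    using card finT card_mono[of T "carrier G"] by linarith
  then obtain b where b: "b \<in> carrier G" "b \<notin> T"
    by blast
  let ?Y = "(\<lambda>(t, j). t \<otimes> inv (b [^] (j::nat))) ` (T \<times> {..<n})"
  have "card ?Y \<le> card T * n"
    using finT card_image_le[of "T \<times> {..<n}"] by (simp add: card_cartesian_product)
  then have "\<not> carrier G \<subseteq> ?Y"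
    using card finT card_mono[of ?Y "carrier G"] by (auto simp: mult.commute)
  then obtain a where a: "a \<in> carrier G" "a \<notin> ?Y"
    by blast
  have "a \<otimes> b [^] j \<notin> T" if "j < n" for j
  proof
    assume "a \<otimes> b [^] j \<in> T"
    moreover have "a = (a \<otimes> b [^] j) \<otimes> inv (b [^] j)"
      using a b by (simp add: m_assoc)
    ultimately have "a \<in> ?Y"
      using that by (intro image_eqI[of _ _ "(a \<otimes> b [^] j, j)"]) auto
    then show False
      using a by blast
  qed
  then show ?thesis
    using that a b by blast
qed

lemma (in group) perfect_subgroup_trivial:
  assumes "solvable G" "subgroup H G" "derived G H = H"
  shows "H = {\<one>}"
proof -
  obtain n where "(derived G ^^ n) H = {\<one>}"
    using solvable_imp_trivial_derived_seq[OF solvable_subgroup[OF assms(2,1)]] by blast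
  moreover have "(derived G ^^ n) H = H"
    using assms(3) by (induction n) simp_all
  ultimately show ?thesis
    by simp
qed

lemma hom_finprod_comm_group:
  assumes "comm_group G" "comm_group H" "f \<in> hom G H" "finite I" "g \<in> I \<rightarrow> carrier G"
  shows "f (finprod G g I) = finprod H (\<lambda>i. f (g i)) I"
proof -
  interpret G: comm_group G by fact
  interpret H: comm_group H by fact
  interpret group_hom G H f
    using assms(3) by (simp add: group_hom_def group_hom_axioms_def G.group_axioms H.group_axioms)
  show ?thesis
    using assms(4,5) by (induction I rule: finite_induct) (auto simp: Pi_def)
qed

lemma (in comm_monoid) finprod_swap:
  assumes "finite I" "finite J" "\<And>i j. i \<in> I \<Longrightarrow> j \<in> J \<Longrightarrow> f i j \<in> carrier G"
  shows "(\<Otimes>j\<in>J. \<Otimes>i\<in>I. f i j) = (\<Otimes>i\<in>I. \<Otimes>j\<in>J. f i j)"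
  using assms(2,3)
proof (induction J rule: finite_induct)
  case (insert j J)
  then have "(\<Otimes>j'\<in>insert j J. \<Otimes>i\<in>I. f i j') = (\<Otimes>i\<in>I. f i j) \<otimes> (\<Otimes>i\<in>I. \<Otimes>j'\<in>J. f i j')"
    by (simp add: Pi_def)
  also have "\<dots> = (\<Otimes>i\<in>I. f i j \<otimes> (\<Otimes>j'\<in>J. f i j'))"
    using insert.prems by (simp add: Pi_def finprod_multf)
  also have "\<dots> = (\<Otimes>i\<in>I. \<Otimes>j'\<in>insert j J. f i j')"
    using insert by (intro finprod_cong') (auto simp: Pi_def)
  finally show ?case .
qed simp

lemma bij_betw_Suc_mod: "0 < (n::nat) \<Longrightarrow> bij_betw (\<lambda>i. Suc i mod n) {..<n} {..<n}"
proof -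
  assume "0 < n"
  then have "inj_on (\<lambda>i. Suc i mod n) {..<n}"
    by (auto simp: inj_on_def mod_Suc split: if_splits)
  moreover have "(\<lambda>i. Suc i mod n) ` {..<n} \<subseteq> {..<n}"
    using \<open>0 < n\<close> by auto
  ultimately show ?thesis
    by (simp add: bij_betw_def endo_inj_surj)
qed

section \<open>Actions on abelian groups\<close>

locale abelian_action = Q: comm_group Q + A: comm_group A
  for Q :: "('q, 'e) monoid_scheme" and A :: "('b, 'd) monoid_scheme" +
  fixes psi :: "'b \<Rightarrow> 'q \<Rightarrow> 'q"
  assumes psi_hom: "x \<in> carrier A \<Longrightarrow> psi x \<in> hom Q Q"
    and psi_compose: "\<lbrakk>x \<in> carrier A; y \<in> carrier A; U \<in> carrier Q\<rbrakk> \<Longrightarrow>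
      psi (x \<otimes>\<^bsub>A\<^esub> y) U = psi x (psi y U)"
    and psi_unit: "U \<in> carrier Q \<Longrightarrow> psi \<one>\<^bsub>A\<^esub> U = U"
begin

lemma psi_closed [intro, simp]: "x \<in> carrier A \<Longrightarrow> U \<in> carrier Q \<Longrightarrow> psi x U \<in> carrier Q"
  using psi_hom by (auto simp: hom_def)

lemma psi_mult: "\<lbrakk>x \<in> carrier A; U \<in> carrier Q; W \<in> carrier Q\<rbrakk> \<Longrightarrow>
    psi x (U \<otimes>\<^bsub>Q\<^esub> W) = psi x U \<otimes>\<^bsub>Q\<^esub> psi x W"
  using psi_hom by (auto simp: hom_def)

lemma psi_one [simp]: "x \<in> carrier A \<Longrightarrow> psi x \<one>\<^bsub>Q\<^esub> = \<one>\<^bsub>Q\<^esub>"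
  using psi_hom by (simp add: group_hom.hom_one group_hom_def group_hom_axioms_def Q.group_axioms)

lemma psi_inv_cancel: "x \<in> carrier A \<Longrightarrow> U \<in> carrier Q \<Longrightarrow> psi (inv\<^bsub>A\<^esub> x) (psi x U) = U"
  using psi_compose[symmetric] psi_unit by simp

lemma psi_eq_one_iff: "x \<in> carrier A \<Longrightarrow> U \<in> carrier Q \<Longrightarrow> psi x U = \<one>\<^bsub>Q\<^esub> \<longleftrightarrow> U = \<one>\<^bsub>Q\<^esub>"
  by (metis psi_inv_cancel psi_one A.inv_closed)

lemma psi_pow_compose: "x \<in> carrier A \<Longrightarrow> U \<in> carrier Q \<Longrightarrow>
    psi (x [^]\<^bsub>A\<^esub> (k::nat)) (psi (x [^]\<^bsub>A\<^esub> (i::nat)) U) = psi (x [^]\<^bsub>A\<^esub> (k + i)) U"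
  using psi_compose[of "x [^]\<^bsub>A\<^esub> k" "x [^]\<^bsub>A\<^esub> i" U] A.nat_pow_mult[of x k i] by simp

lemma psi_pow_fixed:
  assumes "x \<in> carrier A" "U \<in> carrier Q" "psi x U = U"
  shows "psi (x [^]\<^bsub>A\<^esub> (k::nat)) U = U"
proof (induction k)
  case (Suc k)
  then show ?case
    using assms psi_compose[of "x [^]\<^bsub>A\<^esub> k" x U] by simp
qed (simp add: assms psi_unit)

definition fixed_point_free :: "'b \<Rightarrow> bool" where
  "fixed_point_free x \<longleftrightarrow> fixed_points Q psi {x} (carrier Q) = {\<one>\<^bsub>Q\<^esub>}"

lemma fixed_point_freeI:
  "x \<in> carrier A \<Longrightarrow> (\<And>U. U \<in> carrier Q \<Longrightarrow> psi x U = U \<Longrightarrow> U = \<one>\<^bsub>Q\<^esub>) \<Longrightarrow> fixed_point_free x"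
  by (auto simp: fixed_point_free_def fixed_points_def)

lemma fixed_point_freeD:
  "fixed_point_free x \<Longrightarrow> U \<in> carrier Q \<Longrightarrow> psi x U = U \<Longrightarrow> U = \<one>\<^bsub>Q\<^esub>"
  by (auto simp: fixed_point_free_def fixed_points_def)

definition comm_map :: "'b \<Rightarrow> 'q \<Rightarrow> 'q" where
  "comm_map x U = inv\<^bsub>Q\<^esub> U \<otimes>\<^bsub>Q\<^esub> psi x U"

lemma comm_map_hom: "x \<in> carrier A \<Longrightarrow> comm_map x \<in> hom Q Q"
  by (rule homI) (auto simp: comm_map_def psi_mult Q.inv_mult Q.m_ac)

lemma comm_map_mult:
  assumes "x \<in> carrier A" "y \<in> carrier A" "U \<in> carrier Q"
  shows "comm_map (x \<otimes>\<^bsub>A\<^esub> y) U = comm_map y U \<otimes>\<^bsub>Q\<^esub> comm_map x (psi y U)"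
  using assms by (simp add: comm_map_def psi_compose Q.m_assoc Q.inv_solve_left')
    (simp add: Q.m_assoc[symmetric])

lemma comm_map_inv:
  assumes x: "x \<in> carrier A" and U: "U \<in> carrier Q"
  shows "comm_map (inv\<^bsub>A\<^esub> x) U = inv\<^bsub>Q\<^esub> comm_map x (psi (inv\<^bsub>A\<^esub> x) U)"
proof -
  have "psi x (psi (inv\<^bsub>A\<^esub> x) U) = U"
    using x U psi_inv_cancel[of "inv\<^bsub>A\<^esub> x" U] by simp
  then show ?thesis
    using x U by (simp add: comm_map_def Q.inv_mult Q.m_ac)
qed

text \<open>The elements of A acting trivially modulo D form a subgroup of A.\<close>
lemma comm_map_generate:
  assumes D: "subgroup D Q" and c: "c \<in> carrier A"
    and cD: "\<And>U. U \<in> carrier Q \<Longrightarrow> comm_map c U \<in> D"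
    and b: "b \<in> generate A {c}" and U: "U \<in> carrier Q"
  shows "comm_map b U \<in> D"
proof -
  let ?S = "{x \<in> carrier A. \<forall>U\<in>carrier Q. comm_map x U \<in> D}"
  have "subgroup ?S A"
  proof
    show "\<one>\<^bsub>A\<^esub> \<in> ?S"
      using subgroup.one_closed[OF D] by (simp add: comm_map_def psi_unit)
    fix x y assume x: "x \<in> ?S" and y: "y \<in> ?S"
    then show "x \<otimes>\<^bsub>A\<^esub> y \<in> ?S"
      by (simp add: comm_map_mult subgroup.m_closed[OF D])
    show "inv\<^bsub>A\<^esub> x \<in> ?S"
      using x by (simp add: comm_map_inv subgroup.m_inv_closed[OF D])
  qed auto
  then have "generate A {c} \<subseteq> ?S"
    using c cD by (intro A.generate_subgroup_incl) auto
  then show ?thesis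
    using b U by blast
qed

lemma fixed_point_free_if_comm_map_surj:
  assumes fin: "finite (carrier Q)" and c: "c \<in> carrier A"
    and surj: "comm_map c ` carrier Q = carrier Q"
  shows "fixed_point_free c"
proof (rule fixed_point_freeI[OF c])
  have inj: "inj_on (comm_map c) (carrier Q)"
    using fin surj by (simp add: finite_surj_inj)
  show "U = \<one>\<^bsub>Q\<^esub>" if "U \<in> carrier Q" "psi c U = U" for U
    using that c inj_onD[OF inj, of U "\<one>\<^bsub>Q\<^esub>"] by (simp add: comm_map_def)
qed

end

locale elementary_action = abelian_action +
  fixes p :: nat
  assumes finite_Q: "finite (carrier Q)"
    and prime_p: "Factorial_Ring.prime p"
    and A_exponent: "x \<in> carrier A \<Longrightarrow> x [^]\<^bsub>A\<^esub> p = \<one>\<^bsub>A\<^esub>"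
begin

lemma p_pos: "0 < p"
  using prime_p prime_gt_0_nat by blast

lemma pow_mod_p:
  assumes x: "x \<in> carrier A"
  shows "x [^]\<^bsub>A\<^esub> n = x [^]\<^bsub>A\<^esub> (n mod p)"
proof -
  have "x [^]\<^bsub>A\<^esub> n = (x [^]\<^bsub>A\<^esub> p) [^]\<^bsub>A\<^esub> (n div p) \<otimes>\<^bsub>A\<^esub> x [^]\<^bsub>A\<^esub> (n mod p)"
    using x by (simp add: A.nat_pow_pow A.nat_pow_mult)
  then show ?thesis
    using x by (simp add: A_exponent)
qed

lemma fixed_point_free_pow:
  assumes c: "c \<in> carrier A" "fixed_point_free c" and m: "0 < m" "m < p"
  shows "fixed_point_free (c [^]\<^bsub>A\<^esub> m)"
proof (rule fixed_point_freeI)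
  have "coprime m p"
    using prime_p m by (metis coprime_commute dvd_imp_le not_le prime_imp_coprime_nat)
  then obtain k l where kl: "m * k = p * l + 1"
    using bezout_nat[of m p] m by auto
  have "(c [^]\<^bsub>A\<^esub> m) [^]\<^bsub>A\<^esub> k = c [^]\<^bsub>A\<^esub> ((p * l + 1) mod p)"
    using c pow_mod_p[of c "p * l + 1"] by (simp add: A.nat_pow_pow kl)
  also have "\<dots> = c"
    using c prime_gt_1_nat[OF prime_p] by (simp add: mod_Suc)
  finally show "U = \<one>\<^bsub>Q\<^esub>" if "U \<in> carrier Q" "psi (c [^]\<^bsub>A\<^esub> m) U = U" for U
    using that c psi_pow_fixed[of "c [^]\<^bsub>A\<^esub> m" U k] by (simp add: fixed_point_freeD)
qed (use c in simp)

text \<open>The norm is fixed by c, hence trivial.\<close>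
lemma norm_eq_one:
  assumes c: "c \<in> carrier A" "fixed_point_free c" and U: "U \<in> carrier Q"
  shows "(\<Otimes>\<^bsub>Q\<^esub>i\<in>{..<p}. psi (c [^]\<^bsub>A\<^esub> i) U) = \<one>\<^bsub>Q\<^esub>"
proof -
  let ?f = "\<lambda>i. psi (c [^]\<^bsub>A\<^esub> i) U"
  have f: "?f \<in> {..<p} \<rightarrow> carrier Q"
    using c U by auto
  have "psi c (finprod Q ?f {..<p}) = (\<Otimes>\<^bsub>Q\<^esub>i\<in>{..<p}. psi c (?f i))"
    using hom_finprod_comm_group[OF Q.comm_group_axioms Q.comm_group_axioms psi_hom[OF c(1)] _ f]
    by simp
  also have "\<dots> = (\<Otimes>\<^bsub>Q\<^esub>i\<in>{..<p}. ?f (Suc i mod p))"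
  proof (intro Q.finprod_cong')
    fix i
    have "psi c (?f i) = ?f (Suc i)"
      using c U psi_pow_compose[of c U 1 i] by simp
    then show "psi c (?f i) = ?f (Suc i mod p)"
      using pow_mod_p[OF c(1), of "Suc i"] by simp
  qed (use c U in auto)
  also have "\<dots> = finprod Q ?f {..<p}"
    using bij_betw_Suc_mod[OF p_pos] f Q.finprod_reindex[of ?f "\<lambda>i. Suc i mod p" "{..<p}"]
    by (simp add: bij_betw_def)
  finally show ?thesis
    using c f by (simp add: fixed_point_freeD)
qed

text \<open>Multiplying the norms of U under the p subgroups \<open>\<langle>a b\<^sup>j\<rangle>\<close> collects U itself p times;
  the remaining factors regroup, for each \<open>0 < i < p\<close>, into a norm under \<open>\<langle>b\<^sup>i\<rangle>\<close>.\<close>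
lemma pow_p_eq_one:
  assumes a: "a \<in> carrier A" and b: "b \<in> carrier A" "fixed_point_free b"
    and ab: "\<And>j. j < p \<Longrightarrow> fixed_point_free (a \<otimes>\<^bsub>A\<^esub> b [^]\<^bsub>A\<^esub> j)"
    and U: "U \<in> carrier Q"
  shows "U [^]\<^bsub>Q\<^esub> p = \<one>\<^bsub>Q\<^esub>"
proof -
  define F where "F i j = psi (a [^]\<^bsub>A\<^esub> i \<otimes>\<^bsub>A\<^esub> (b [^]\<^bsub>A\<^esub> i) [^]\<^bsub>A\<^esub> j) U" for i j :: nat
  have F: "F i j \<in> carrier Q" for i j
    using a b U by (simp add: F_def)
  have row: "(\<Otimes>\<^bsub>Q\<^esub>i\<in>{..<p}. F i j) = \<one>\<^bsub>Q\<^esub>" if j: "j < p" for j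
  proof -
    have "F i j = psi ((a \<otimes>\<^bsub>A\<^esub> b [^]\<^bsub>A\<^esub> j) [^]\<^bsub>A\<^esub> i) U" for i
      using a b by (simp add: F_def A.nat_pow_distrib A.nat_pow_pow mult.commute)
    then show ?thesis
      using norm_eq_one[OF _ ab[OF j] U] a b by simp
  qed
  have column: "(\<Otimes>\<^bsub>Q\<^esub>j\<in>{..<p}. F i j) = (if 0 = i then U [^]\<^bsub>Q\<^esub> p else \<one>\<^bsub>Q\<^esub>)"
    if i: "i < p" for i
  proof (cases "i = 0")
    case True
    then show ?thesis
      using U by (simp add: F_def psi_unit Q.finprod_const)
  next
    case False
    have "F i j = psi ((b [^]\<^bsub>A\<^esub> i) [^]\<^bsub>A\<^esub> j) (psi (a [^]\<^bsub>A\<^esub> i) U)" for j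
      using a b U psi_compose[of "(b [^]\<^bsub>A\<^esub> i) [^]\<^bsub>A\<^esub> j" "a [^]\<^bsub>A\<^esub> i" U]
      by (simp add: F_def A.m_comm)
    moreover have "fixed_point_free (b [^]\<^bsub>A\<^esub> i)"
      using fixed_point_free_pow[OF b] False i by simp
    ultimately show ?thesis
      using False norm_eq_one[of "b [^]\<^bsub>A\<^esub> i" "psi (a [^]\<^bsub>A\<^esub> i) U"] a b U by simp
  qed
  have "\<one>\<^bsub>Q\<^esub> = (\<Otimes>\<^bsub>Q\<^esub>j\<in>{..<p}. \<Otimes>\<^bsub>Q\<^esub>i\<in>{..<p}. F i j)"
    using row by (intro Q.finprod_one_eqI[symmetric]) simp
  also have "\<dots> = (\<Otimes>\<^bsub>Q\<^esub>i\<in>{..<p}. \<Otimes>\<^bsub>Q\<^esub>j\<in>{..<p}. F i j)"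
    by (rule Q.finprod_swap) (auto simp: F)
  also have "\<dots> = (\<Otimes>\<^bsub>Q\<^esub>i\<in>{..<p}. if 0 = i then U [^]\<^bsub>Q\<^esub> p else \<one>\<^bsub>Q\<^esub>)"
    using column U by (intro Q.finprod_cong') auto
  also have "\<dots> = U [^]\<^bsub>Q\<^esub> p"
    using Q.finprod_singleton[of 0 "{..<p}" "\<lambda>_. U [^]\<^bsub>Q\<^esub> p"] p_pos U by simp
  finally show ?thesis ..
qed

definition cyclic_orbit where
  "cyclic_orbit b U = (\<lambda>i. psi (b [^]\<^bsub>A\<^esub> i) U) ` {..<p}"

lemma cyclic_orbit_subset:
  "b \<in> carrier A \<Longrightarrow> U \<in> carrier Q - {\<one>\<^bsub>Q\<^esub>} \<Longrightarrow> cyclic_orbit b U \<subseteq> carrier Q - {\<one>\<^bsub>Q\<^esub>}"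
  by (auto simp: cyclic_orbit_def psi_eq_one_iff)

lemma cyclic_orbit_self: "U \<in> carrier Q \<Longrightarrow> U \<in> cyclic_orbit b U"
  using p_pos by (auto simp: cyclic_orbit_def psi_unit intro!: image_eqI[of _ _ 0])

lemma card_cyclic_orbit:
  assumes b: "b \<in> carrier A" "fixed_point_free b" and U: "U \<in> carrier Q - {\<one>\<^bsub>Q\<^esub>}"
  shows "card (cyclic_orbit b U) = p"
proof -
  have "i = j" if ij: "i < j" "j < p" and eq: "psi (b [^]\<^bsub>A\<^esub> i) U = psi (b [^]\<^bsub>A\<^esub> j) U" for i j
  proof -
    let ?W = "psi (b [^]\<^bsub>A\<^esub> i) U"
    have "psi (b [^]\<^bsub>A\<^esub> (j - i)) ?W = ?W"
      using U b ij eq psi_pow_compose[of b U "j - i" i] by simp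
    moreover have "fixed_point_free (b [^]\<^bsub>A\<^esub> (j - i))"
      using fixed_point_free_pow[OF b] ij by simp
    ultimately have "?W = \<one>\<^bsub>Q\<^esub>"
      using U b by (simp add: fixed_point_freeD)
    then show ?thesis
      using U b by (simp add: psi_eq_one_iff)
  qed
  then have "inj_on (\<lambda>i. psi (b [^]\<^bsub>A\<^esub> i) U) {..<p}"
    by (intro inj_onI) (metis lessThan_iff linorder_neqE_nat)
  then show ?thesis
    by (simp add: cyclic_orbit_def card_image)
qed

lemma cyclic_orbit_eq:
  assumes b: "b \<in> carrier A" "fixed_point_free b" and U: "U \<in> carrier Q - {\<one>\<^bsub>Q\<^esub>}"
    and V: "V \<in> cyclic_orbit b U"
  shows "cyclic_orbit b V = cyclic_orbit b U"
proof -
  obtain i :: nat where i: "V = psi (b [^]\<^bsub>A\<^esub> i) U"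
    using V unfolding cyclic_orbit_def by blast
  have "psi (b [^]\<^bsub>A\<^esub> k) V \<in> cyclic_orbit b U" for k :: nat
    using U b i psi_pow_compose[of b U k i] pow_mod_p[OF b(1), of "k + i"] p_pos
    by (auto simp: cyclic_orbit_def)
  then have "cyclic_orbit b V \<subseteq> cyclic_orbit b U"
    by (auto simp: cyclic_orbit_def)
  moreover have "card (cyclic_orbit b V) = card (cyclic_orbit b U)"
    using card_cyclic_orbit[OF b] cyclic_orbit_subset[OF b(1) U] U V by auto
  ultimately show ?thesis
    by (intro card_subset_eq) (simp_all add: cyclic_orbit_def)
qed

lemma prime_dvd_card_minus_one:
  assumes b: "b \<in> carrier A" "fixed_point_free b"
  shows "p dvd card (carrier Q) - 1"
proof -
  let ?X = "carrier Q - {\<one>\<^bsub>Q\<^esub>}"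
  have "?X = \<Union>(cyclic_orbit b ` ?X)"
    using cyclic_orbit_subset[OF b(1)] cyclic_orbit_self by blast
  moreover have "p dvd card (\<Union>(cyclic_orbit b ` ?X))"
  proof (rule dvd_partition)
    show "finite (\<Union>(cyclic_orbit b ` ?X))"
      by (simp add: cyclic_orbit_def finite_Q)
    show "\<forall>c\<in>cyclic_orbit b ` ?X. p dvd card c"
      using card_cyclic_orbit[OF b] by auto
    show "\<forall>c1\<in>cyclic_orbit b ` ?X. \<forall>c2\<in>cyclic_orbit b ` ?X. c1 \<noteq> c2 \<longrightarrow> c1 \<inter> c2 = {}"
      using cyclic_orbit_eq[OF b] by blast
  qed
  ultimately show ?thesis
    using finite_Q by (simp add: card_Diff_singleton)
qed

lemma carrier_trivial:
  assumes a: "a \<in> carrier A" and b: "b \<in> carrier A" "fixed_point_free b"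
    and ab: "\<And>j. j < p \<Longrightarrow> fixed_point_free (a \<otimes>\<^bsub>A\<^esub> b [^]\<^bsub>A\<^esub> j)"
  shows "carrier Q = {\<one>\<^bsub>Q\<^esub>}"
proof (rule ccontr)
  assume "carrier Q \<noteq> {\<one>\<^bsub>Q\<^esub>}"
  then obtain U where U: "U \<in> carrier Q" "U \<noteq> \<one>\<^bsub>Q\<^esub>"
    by blast
  have "Q.ord U dvd p"
    using pow_p_eq_one[OF a b ab U(1)] U by (simp add: Q.pow_eq_id)
  moreover have "Q.ord U \<noteq> 1"
    using U Q.ord_eq_1 by blast
  ultimately have "p dvd card (carrier Q)"
    using prime_p Q.ord_dvd_group_order[OF U(1)] by (auto simp: prime_nat_iff order_def)
  moreover have "card (carrier Q) \<noteq> 0"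
    using finite_Q U by auto
  ultimately have "p dvd 1"
    using prime_dvd_card_minus_one[OF b] by (metis dvd_diff_nat diff_diff_cancel less_one not_le)
  then show False
    using prime_p by simp
qed

end

section \<open>Actions by automorphisms and invariant subgroups\<close>

locale aut_action = G: group G + A: comm_group A
  for G :: "('a, 'c) monoid_scheme" and A :: "('b, 'd) monoid_scheme" +
  fixes phi :: "'b \<Rightarrow> 'a \<Rightarrow> 'a"
  assumes phi_AutoGroup: "phi \<in> hom A (AutoGroup G)"
begin

lemma phi_auto: "x \<in> carrier A \<Longrightarrow> phi x \<in> auto G"
  using phi_AutoGroup by (auto simp: hom_def AutoGroup_def)

lemma phi_group_hom: "x \<in> carrier A \<Longrightarrow> group_hom G G (phi x)"
  using phi_auto by (simp add: auto_def group_hom_def group_hom_axioms_def G.group_axioms)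

lemma phi_closed [simp]: "x \<in> carrier A \<Longrightarrow> g \<in> carrier G \<Longrightarrow> phi x g \<in> carrier G"
  using group_hom.hom_closed[OF phi_group_hom] .

lemma phi_mult: "\<lbrakk>x \<in> carrier A; g \<in> carrier G; h \<in> carrier G\<rbrakk> \<Longrightarrow>
    phi x (g \<otimes>\<^bsub>G\<^esub> h) = phi x g \<otimes>\<^bsub>G\<^esub> phi x h"
  using group_hom.hom_mult[OF phi_group_hom] .

lemma phi_inv: "x \<in> carrier A \<Longrightarrow> g \<in> carrier G \<Longrightarrow> phi x (inv\<^bsub>G\<^esub> g) = inv\<^bsub>G\<^esub> phi x g"
  using group_hom.hom_inv[OF phi_group_hom] .

lemma phi_one [simp]: "x \<in> carrier A \<Longrightarrow> phi x \<one>\<^bsub>G\<^esub> = \<one>\<^bsub>G\<^esub>"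
  using group_hom.hom_one[OF phi_group_hom] .

lemma phi_compose: "\<lbrakk>x \<in> carrier A; y \<in> carrier A; g \<in> carrier G\<rbrakk> \<Longrightarrow>
    phi (x \<otimes>\<^bsub>A\<^esub> y) g = phi x (phi y g)"
  using phi_AutoGroup phi_auto
  by (simp add: hom_def AutoGroup_def BijGroup_def auto_def compose_def)

lemma phi_unit: "g \<in> carrier G \<Longrightarrow> phi \<one>\<^bsub>A\<^esub> g = g"
proof -
  interpret group_hom A "AutoGroup G" phi
    using phi_AutoGroup
    by (simp add: group_hom_def group_hom_axioms_def A.group_axioms G.AutoGroup)
  show "g \<in> carrier G \<Longrightarrow> phi \<one>\<^bsub>A\<^esub> g = g"
    by (simp add: AutoGroup_def BijGroup_def)
qed

lemma phi_commute: "\<lbrakk>x \<in> carrier A; y \<in> carrier A; g \<in> carrier G\<rbrakk> \<Longrightarrow>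
    phi x (phi y g) = phi y (phi x g)"
  by (metis phi_compose A.m_comm)

definition invariant :: "'a set \<Rightarrow> bool" where
  "invariant H \<longleftrightarrow> subgroup H G \<and> (\<forall>x\<in>carrier A. phi x ` H \<subseteq> H)"

lemma invariant_subset: "invariant H \<Longrightarrow> H \<subseteq> carrier G"
  by (simp add: invariant_def subgroup.subset)

lemma invariant_carrier: "invariant (carrier G)"
  by (auto simp: invariant_def G.subgroup_self)

lemma invariant_image:
  assumes H: "invariant H" and x: "x \<in> carrier A"
  shows "phi x ` H = H"
proof
  show "phi x ` H \<subseteq> H"
    using H x by (simp add: invariant_def)
  show "H \<subseteq> phi x ` H"
  proof
    fix h assume h: "h \<in> H"
    then have "phi (inv\<^bsub>A\<^esub> x) h \<in> H"
      using H x by (auto simp: invariant_def)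
    moreover have "h = phi x (phi (inv\<^bsub>A\<^esub> x) h)"
      using h x invariant_subset[OF H] by (auto simp: phi_compose[symmetric] phi_unit)
    ultimately show "h \<in> phi x ` H"
      by blast
  qed
qed

lemma invariant_generate:
  assumes S: "S \<subseteq> carrier G" and inv: "\<And>x. x \<in> carrier A \<Longrightarrow> phi x ` S \<subseteq> S"
  shows "invariant (generate G S)"
  unfolding invariant_def
proof (intro conjI ballI)
  fix x assume x: "x \<in> carrier A"
  have "phi x ` generate G S = generate G (phi x ` S)"
    using group_hom.generate_img[OF phi_group_hom[OF x] S] ..
  also have "\<dots> \<subseteq> generate G S"
    using inv[OF x] S by (intro G.mono_generate)
  finally show "phi x ` generate G S \<subseteq> generate G S" .
qed (rule G.generate_is_subgroup[OF S])

lemma invariant_fixed_points: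
  assumes H: "invariant H" and B: "B \<subseteq> carrier A"
  shows "invariant (fixed_points G phi B H)"
proof -
  have sub: "H \<subseteq> carrier G" "subgroup H G"
    using H by (auto simp: invariant_def subgroup.subset)
  have "subgroup (fixed_points G phi B H) G"
  proof
    fix g h assume g: "g \<in> fixed_points G phi B H" and h: "h \<in> fixed_points G phi B H"
    have "g \<in> carrier G" "h \<in> carrier G"
      using g h sub(1) by (auto simp: fixed_points_def)
    then show "g \<otimes>\<^bsub>G\<^esub> h \<in> fixed_points G phi B H" "inv\<^bsub>G\<^esub> g \<in> fixed_points G phi B H"
      using g h sub(2) B by (auto simp: fixed_points_def phi_mult phi_inv subgroup.m_closed
          subgroup.m_inv_closed dest: subsetD)
  qed (use sub B in \<open>auto simp: fixed_points_def subgroup.one_closed dest: subsetD\<close>)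
  moreover have "phi x ` fixed_points G phi B H \<subseteq> fixed_points G phi B H"
    if x: "x \<in> carrier A" for x
  proof
    fix g assume "g \<in> phi x ` fixed_points G phi B H"
    then obtain h where h: "h \<in> H" "\<forall>b\<in>B. phi b h = h" and g: "g = phi x h"
      by (auto simp: fixed_points_def)
    have "phi b g = g" if "b \<in> B" for b
      using that h g x B sub(1) phi_commute[of b x h] by (auto dest: subsetD)
    moreover have "g \<in> H"
      using H x h g by (auto simp: invariant_def)
    ultimately show "g \<in> fixed_points G phi B H"
      by (simp add: fixed_points_def)
  qed
  ultimately show ?thesis
    by (simp add: invariant_def)
qed

lemma action_commutator_subset:
  assumes H: "invariant H" and B: "B \<subseteq> carrier A"
  shows "action_commutator G phi H B \<subseteq> H"
  unfolding action_commutator_def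
  using H B by (intro G.generate_subgroup_incl)
    (auto simp: invariant_def subgroup.m_closed subgroup.m_inv_closed subset_iff)

lemma invariant_action_commutator:
  assumes H: "invariant H" and B: "B \<subseteq> carrier A"
  shows "invariant (action_commutator G phi H B)"
  unfolding action_commutator_def
proof (rule invariant_generate)
  show "{inv\<^bsub>G\<^esub> h \<otimes>\<^bsub>G\<^esub> phi b h |h b. h \<in> H \<and> b \<in> B} \<subseteq> carrier G"
    using invariant_subset[OF H] B by (blast intro: G.m_closed G.inv_closed phi_closed)
  fix x assume x: "x \<in> carrier A"
  have "phi x (inv\<^bsub>G\<^esub> h \<otimes>\<^bsub>G\<^esub> phi b h) = inv\<^bsub>G\<^esub> phi x h \<otimes>\<^bsub>G\<^esub> phi b (phi x h)"
    if "h \<in> H" "b \<in> B" for h b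
  proof -
    have "h \<in> carrier G" "b \<in> carrier A"
      using that B invariant_subset[OF H] by auto
    then show ?thesis
      using x by (simp add: phi_mult phi_inv phi_commute)
  qed
  then show "phi x ` {inv\<^bsub>G\<^esub> h \<otimes>\<^bsub>G\<^esub> phi b h |h b. h \<in> H \<and> b \<in> B}
      \<subseteq> {inv\<^bsub>G\<^esub> h \<otimes>\<^bsub>G\<^esub> phi b h |h b. h \<in> H \<and> b \<in> B}"
    using H x by (auto simp: invariant_def) blast
qed

lemma derived_image:
  assumes H: "invariant H" and x: "x \<in> carrier A"
  shows "phi x ` derived G H = derived G H"
  using group_hom.derived_img[OF phi_group_hom[OF x] invariant_subset[OF H]]
  by (simp add: invariant_image[OF H x])


definition pointwise_stabilizer where
  "pointwise_stabilizer H = {x \<in> carrier A. \<forall>h\<in>H. phi x h = h}"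

lemma subgroup_pointwise_stabilizer:
  assumes H: "H \<subseteq> carrier G"
  shows "subgroup (pointwise_stabilizer H) A"
proof
  fix x y assume x: "x \<in> pointwise_stabilizer H" and y: "y \<in> pointwise_stabilizer H"
  then show "x \<otimes>\<^bsub>A\<^esub> y \<in> pointwise_stabilizer H"
    using H by (auto simp: pointwise_stabilizer_def phi_compose)
  have "phi (inv\<^bsub>A\<^esub> x) h = h" if h: "h \<in> H" for h
  proof -
    have "h \<in> carrier G" "x \<in> carrier A" "phi x h = h"
      using x h H by (auto simp: pointwise_stabilizer_def)
    then show ?thesis
      using phi_compose[of "inv\<^bsub>A\<^esub> x" x h] by (simp add: phi_unit)
  qed
  then show "inv\<^bsub>A\<^esub> x \<in> pointwise_stabilizer H"
    using x by (simp add: pointwise_stabilizer_def)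
qed (use H in \<open>auto simp: pointwise_stabilizer_def phi_unit\<close>)

end

section \<open>The induced action on H/H'\<close>

locale invariant_quotient = aut_action +
  fixes H
  assumes invariant_H: "invariant H"
begin

abbreviation "N \<equiv> derived G H"
abbreviation "Q \<equiv> G\<lparr>carrier := H\<rparr> Mod N"

definition quotient_map where
  "quotient_map h = N #>\<^bsub>G\<^esub> h"

definition induced where
  "induced x U = phi x ` U"

lemma phi_in_H: "x \<in> carrier A \<Longrightarrow> h \<in> H \<Longrightarrow> phi x h \<in> H"
  using invariant_H by (auto simp: invariant_def)

lemma subgroup_H: "subgroup H G"
  using invariant_H by (simp add: invariant_def)

lemma H_subset: "H \<subseteq> carrier G"
  using invariant_subset[OF invariant_H] .

lemma N_subset: "N \<subseteq> H"
  using G.derived_incl[OF subset_refl subgroup_H] .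

lemma comm_group_Q: "comm_group Q"
  using G.derived_quot_of_subgroup_is_comm_group[OF subgroup_H] .

lemma quotient_map_group_hom: "group_hom (G\<lparr>carrier := H\<rparr>) Q quotient_map"
proof -
  interpret normal N "G\<lparr>carrier := H\<rparr>"
    using G.derived_subgroup_is_normal[OF subgroup_H] .
  have "quotient_map = (\<lambda>h. N #>\<^bsub>G\<lparr>carrier := H\<rparr>\<^esub> h)"
    by (simp add: fun_eq_iff quotient_map_def r_coset_def)
  then show ?thesis
    using r_coset_hom_Mod comm_group.axioms(2)[OF comm_group_Q]
    by (simp add: group_hom_def group_hom_axioms_def is_group)
qed

lemma carrier_Q: "carrier Q = quotient_map ` H"
  by (simp add: carrier_FactGroup quotient_map_def)

lemma quotient_map_mult: "h \<in> H \<Longrightarrow> k \<in> H \<Longrightarrow>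
    quotient_map (h \<otimes>\<^bsub>G\<^esub> k) = quotient_map h \<otimes>\<^bsub>Q\<^esub> quotient_map k"
  using group_hom.hom_mult[OF quotient_map_group_hom] by simp

lemma quotient_map_inv: "h \<in> H \<Longrightarrow> quotient_map (inv\<^bsub>G\<^esub> h) = inv\<^bsub>Q\<^esub> quotient_map h"
  using group_hom.hom_inv[OF quotient_map_group_hom] G.m_inv_consistent[OF subgroup_H] by simp

lemma quotient_map_eq_one: "h \<in> H \<Longrightarrow> quotient_map h = \<one>\<^bsub>Q\<^esub> \<Longrightarrow> h \<in> N"
  using group.rcos_self[OF G.subgroup_imp_group[OF subgroup_H], of h N]
    normal.axioms(1)[OF G.derived_subgroup_is_normal[OF subgroup_H]]
  by (simp add: quotient_map_def)

lemma induced_quotient_map: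
  assumes x: "x \<in> carrier A" and h: "h \<in> H"
  shows "induced x (quotient_map h) = quotient_map (phi x h)"
proof -
  have "phi x (n \<otimes>\<^bsub>G\<^esub> h) = phi x n \<otimes>\<^bsub>G\<^esub> phi x h" if "n \<in> N" for n
    using that N_subset H_subset x h by (intro phi_mult) auto
  then have "phi x ` (N #>\<^bsub>G\<^esub> h) = (phi x ` N) #>\<^bsub>G\<^esub> phi x h"
    by (auto simp: r_coset_def) (metis UN_iff singletonI image_eqI)
  then show ?thesis
    by (simp add: induced_def quotient_map_def derived_image[OF invariant_H x])
qed

lemma induced_closed: "x \<in> carrier A \<Longrightarrow> U \<in> carrier Q \<Longrightarrow> induced x U \<in> carrier Q"
  by (auto simp: carrier_Q induced_quotient_map phi_in_H)

lemma induced_mult: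
  assumes x: "x \<in> carrier A" and U: "U \<in> carrier Q" and W: "W \<in> carrier Q"
  shows "induced x (U \<otimes>\<^bsub>Q\<^esub> W) = induced x U \<otimes>\<^bsub>Q\<^esub> induced x W"
proof -
  obtain h k where h: "h \<in> H" "U = quotient_map h" and k: "k \<in> H" "W = quotient_map k"
    using U W by (auto simp: carrier_Q)
  have "U \<otimes>\<^bsub>Q\<^esub> W = quotient_map (h \<otimes>\<^bsub>G\<^esub> k)"
    using h k quotient_map_mult by simp
  then have "induced x (U \<otimes>\<^bsub>Q\<^esub> W) = quotient_map (phi x (h \<otimes>\<^bsub>G\<^esub> k))"
    using h k x by (simp add: induced_quotient_map subgroup.m_closed[OF subgroup_H])
  also have "phi x (h \<otimes>\<^bsub>G\<^esub> k) = phi x h \<otimes>\<^bsub>G\<^esub> phi x k"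
    using h k x H_subset by (intro phi_mult) auto
  also have "quotient_map \<dots> = quotient_map (phi x h) \<otimes>\<^bsub>Q\<^esub> quotient_map (phi x k)"
    using h k x by (intro quotient_map_mult phi_in_H)
  also have "\<dots> = induced x U \<otimes>\<^bsub>Q\<^esub> induced x W"
    using h k x by (simp only: induced_quotient_map)
  finally show ?thesis .
qed

sublocale quotient: abelian_action Q A induced
proof (intro abelian_action.intro abelian_action_axioms.intro)
  show "comm_group Q"
    by (rule comm_group_Q)
  show "comm_group A"
    by (rule A.comm_group_axioms)
  show "induced x \<in> hom Q Q" if x: "x \<in> carrier A" for x
  proof (rule homI)
    show "induced x U \<in> carrier Q" if "U \<in> carrier Q" for U
      using x that by (rule induced_closed)
    show "induced x (U \<otimes>\<^bsub>Q\<^esub> W) = induced x U \<otimes>\<^bsub>Q\<^esub> induced x W"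
      if "U \<in> carrier Q" "W \<in> carrier Q" for U W
      using x that by (rule induced_mult)
  qed
  show "induced (x \<otimes>\<^bsub>A\<^esub> y) U = induced x (induced y U)"
    if "x \<in> carrier A" "y \<in> carrier A" "U \<in> carrier Q" for x y U
    using that H_subset
    by (auto simp: carrier_Q induced_quotient_map phi_in_H phi_compose)
  show "induced \<one>\<^bsub>A\<^esub> U = U" if "U \<in> carrier Q" for U
    using that H_subset by (auto simp: carrier_Q induced_quotient_map phi_unit)
qed

lemma quotient_map_commutator:
  assumes h: "h \<in> H" and b: "b \<in> carrier A"
  shows "quotient_map (inv\<^bsub>G\<^esub> h \<otimes>\<^bsub>G\<^esub> phi b h) = quotient.comm_map b (quotient_map h)"
  using h b subgroup.m_inv_closed[OF subgroup_H h]
  by (simp only: quotient.comm_map_def quotient_map_mult quotient_map_inv induced_quotient_map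
      phi_in_H)

lemma finite_Q: "finite (carrier G) \<Longrightarrow> finite (carrier Q)"
  using H_subset by (simp add: carrier_Q finite_subset)

lemma fixed_point_free_if_commutator_full:
  assumes fin: "finite (carrier G)" and c: "c \<in> carrier A"
    and full: "action_commutator G phi H (generate A {c}) = H"
  shows "quotient.fixed_point_free c"
proof (rule quotient.fixed_point_free_if_comm_map_surj[OF finite_Q[OF fin] c])
  let ?D = "quotient.comm_map c ` carrier Q"
  let ?S = "{inv\<^bsub>G\<^esub> h \<otimes>\<^bsub>G\<^esub> phi b h | h b. h \<in> H \<and> b \<in> generate A {c}}"
  have D: "subgroup ?D Q"
    using quotient.comm_map_hom[OF c]
    by (intro group_hom.img_is_subgroup)
      (simp add: group_hom_def group_hom_axioms_def quotient.Q.group_axioms)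
  have S: "?S \<subseteq> H"
    using full generate.incl[of _ ?S G] by (auto simp: action_commutator_def)
  have "quotient_map s \<in> ?D" if "s \<in> ?S" for s
  proof -
    obtain h b where h: "h \<in> H" and b: "b \<in> generate A {c}" and s: "s = inv\<^bsub>G\<^esub> h \<otimes>\<^bsub>G\<^esub> phi b h"
      using \<open>s \<in> ?S\<close> by blast
    have "b \<in> carrier A"
      using b A.generate_incl c by blast
    then have "quotient_map s = quotient.comm_map b (quotient_map h)"
      unfolding s by (rule quotient_map_commutator[OF h])
    also have "\<dots> \<in> ?D"
      using h by (intro quotient.comm_map_generate[OF D c _ b]) (auto simp: carrier_Q)
    finally show ?thesis .
  qed
  then have "generate Q (quotient_map ` ?S) \<subseteq> ?D"
    by (intro quotient.Q.generate_subgroup_incl[OF _ D]) auto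
  also have "generate Q (quotient_map ` ?S) = quotient_map ` generate (G\<lparr>carrier := H\<rparr>) ?S"
    using S by (intro group_hom.generate_img[OF quotient_map_group_hom]) simp
  also have "\<dots> = carrier Q"
    using full S
    by (simp add: G.generate_consistent[OF _ subgroup_H] action_commutator_def carrier_Q)
  finally show "?D = carrier Q"
    using quotient.comm_map_hom[OF c] by (auto simp: hom_def)
qed

lemma derived_eq_if_commutators_full:
  assumes fin: "finite (carrier G)" and p: "Factorial_Ring.prime (p::nat)"
    and exp: "\<And>x. x \<in> carrier A \<Longrightarrow> x [^]\<^bsub>A\<^esub> p = \<one>\<^bsub>A\<^esub>"
    and a: "a \<in> carrier A" and b: "b \<in> carrier A"
    and full_b: "action_commutator G phi H (generate A {b}) = H"
    and full_ab: "\<And>j. j < p \<Longrightarrow> action_commutator G phi H (generate A {a \<otimes>\<^bsub>A\<^esub> b [^]\<^bsub>A\<^esub> j}) = H"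
  shows "derived G H = H"
proof -
  interpret elementary_action Q A induced p
    using finite_Q[OF fin] p exp
    by (intro elementary_action.intro elementary_action_axioms.intro quotient.abelian_action_axioms)
  have "quotient.fixed_point_free b"
    using fixed_point_free_if_commutator_full[OF fin b full_b] .
  moreover have "quotient.fixed_point_free (a \<otimes>\<^bsub>A\<^esub> b [^]\<^bsub>A\<^esub> j)" if "j < p" for j
    using fixed_point_free_if_commutator_full[OF fin _ full_ab[OF that]] a b by simp
  ultimately have "carrier Q = {\<one>\<^bsub>Q\<^esub>}"
    using carrier_trivial[OF a b] by blast
  then have "H \<subseteq> N"
    using quotient_map_eq_one by (auto simp: carrier_Q) blast
  then show ?thesis
    using N_subset by blast
qed

end

section \<open>Centralizers of subgroups of index at most p\<close>

locale good_elementary_action = aut_action +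
  fixes p :: nat
  assumes finite_G: "finite (carrier G)" and solvable_G: "solvable G"
    and finite_A: "finite (carrier A)" and prime_p: "Factorial_Ring.prime p"
    and A_exponent: "x \<in> carrier A \<Longrightarrow> x [^]\<^bsub>A\<^esub> p = \<one>\<^bsub>A\<^esub>"
    and card_A: "p ^ 3 \<le> card (carrier A)"
    and good: "good_action G A phi"
    and abelian_centralizers: "\<lbrakk>a \<in> carrier A; a \<noteq> \<one>\<^bsub>A\<^esub>\<rbrakk> \<Longrightarrow>
      comm_group (G\<lparr>carrier := fixed_points G phi {a} (carrier G)\<rparr>)"
begin

definition large_subgroups where
  "large_subgroups = {B. subgroup B A \<and> card (carrier A) \<le> p * card B}"

definition centralizer_hull where
  "centralizer_hull = generate G (\<Union>B\<in>large_subgroups. fixed_points G phi B (carrier G))"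

lemma large_subgroups_meet:
  assumes B1: "B1 \<in> large_subgroups" and B2: "B2 \<in> large_subgroups"
  shows "\<exists>a\<in>B1 \<inter> B2. a \<noteq> \<one>\<^bsub>A\<^esub>"
proof (rule A.subgroups_inter_nontrivial[OF finite_A])
  show "subgroup B1 A" "subgroup B2 A"
    using B1 B2 by (auto simp: large_subgroups_def)
  let ?c = "card (carrier A)"
  have "?c * ?c \<le> (p * card B1) * (p * card B2)"
    using B1 B2 unfolding large_subgroups_def by (intro mult_le_mono) simp_all
  then have le: "?c * ?c \<le> p\<^sup>2 * (card B1 * card B2)"
    by (simp add: power2_eq_square ac_simps)
  have "p\<^sup>2 < p ^ 3"
    using prime_gt_1_nat[OF prime_p] by (simp add: power2_eq_square power3_eq_cube)
  then have "p\<^sup>2 < ?c"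
    using card_A by linarith
  show "?c < card B1 * card B2"
  proof (rule ccontr)
    assume "\<not> ?c < card B1 * card B2"
    then have "?c * ?c \<le> p\<^sup>2 * ?c"
      using le by (meson le_trans mult_le_mono2 not_le)
    then show False
      using \<open>p\<^sup>2 < ?c\<close> by simp
  qed
qed

lemma subgroup_centralizer_hull: "subgroup centralizer_hull G"
  unfolding centralizer_hull_def by (intro G.generate_is_subgroup) (auto simp: fixed_points_def)

lemma centralizer_hull_commute:
  assumes "u \<in> centralizer_hull" "v \<in> centralizer_hull"
  shows "u \<otimes>\<^bsub>G\<^esub> v = v \<otimes>\<^bsub>G\<^esub> u"
  using assms unfolding centralizer_hull_def
proof (rule G.generate_commute[rotated 2])
  fix s t assume "s \<in> (\<Union>B\<in>large_subgroups. fixed_points G phi B (carrier G))"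
    and "t \<in> (\<Union>B\<in>large_subgroups. fixed_points G phi B (carrier G))"
  then obtain B1 B2 where B: "B1 \<in> large_subgroups" "B2 \<in> large_subgroups"
    and s: "s \<in> fixed_points G phi B1 (carrier G)" and t: "t \<in> fixed_points G phi B2 (carrier G)"
    by blast
  obtain a where a: "a \<in> B1" "a \<in> B2" "a \<noteq> \<one>\<^bsub>A\<^esub>"
    using large_subgroups_meet[OF B] by blast
  then have "a \<in> carrier A"
    using B by (auto simp: large_subgroups_def dest: subgroup.subset)
  then interpret C: comm_group "G\<lparr>carrier := fixed_points G phi {a} (carrier G)\<rparr>"
    using abelian_centralizers a(3) by blast
  show "s \<otimes>\<^bsub>G\<^esub> t = t \<otimes>\<^bsub>G\<^esub> s"
    using C.m_comm[of s t] s t a by (simp add: fixed_points_def)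
qed (auto simp: fixed_points_def)

lemma subset_centralizer_hull_or_commutator_full:
  assumes H: "invariant H"
    and smaller: "\<And>H'. invariant H' \<Longrightarrow> H' \<subset> H \<Longrightarrow> H' \<subseteq> centralizer_hull"
    and x: "x \<in> carrier A" "x \<notin> pointwise_stabilizer H"
  shows "H \<subseteq> centralizer_hull \<or> action_commutator G phi H (generate A {x}) = H"
proof (rule disjCI)
  let ?B = "generate A {x}"
  assume proper: "action_commutator G phi H ?B \<noteq> H"
  have B: "subgroup ?B A" "?B \<subseteq> carrier A"
    using x A.generate_is_subgroup A.generate_incl by auto
  have "\<forall>b\<in>?B. phi b ` H \<subseteq> H"
    using H B(2) by (auto simp: invariant_def)
  then have decomposition: "H = action_commutator G phi H ?B <#>\<^bsub>G\<^esub> fixed_points G phi ?B H"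
    using good B(1) H unfolding good_action_def invariant_def by blast
  have "action_commutator G phi H ?B \<subseteq> centralizer_hull"
    using H B(2) proper action_commutator_subset
    by (intro smaller invariant_action_commutator) auto
  moreover have "fixed_points G phi ?B H \<subseteq> centralizer_hull"
  proof (intro smaller invariant_fixed_points[OF H B(2)] psubsetI)
    obtain h where "h \<in> H" "phi x h \<noteq> h"
      using x by (auto simp: pointwise_stabilizer_def)
    then show "fixed_points G phi ?B H \<noteq> H"
      using generate.incl[of x "{x}" A] by (auto simp: fixed_points_def)
  qed (auto simp: fixed_points_def)
  ultimately have
    "action_commutator G phi H ?B <#>\<^bsub>G\<^esub> fixed_points G phi ?B H \<subseteq> centralizer_hull"
    using subgroup_centralizer_hull unfolding set_mult_def by (blast intro: subgroup.m_closed)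
  then show "H \<subseteq> centralizer_hull"
    using decomposition by simp
qed

lemma trivial_if_commutators_full:
  assumes H: "invariant H"
    and small: "p * card (pointwise_stabilizer H) < card (carrier A)"
    and full: "\<And>x. \<lbrakk>x \<in> carrier A; x \<notin> pointwise_stabilizer H\<rbrakk> \<Longrightarrow>
      action_commutator G phi H (generate A {x}) = H"
  shows "H = {\<one>\<^bsub>G\<^esub>}"
proof -
  interpret invariant_quotient G A phi H
    by (intro invariant_quotient.intro invariant_quotient_axioms.intro aut_action_axioms H)
  obtain a b where a: "a \<in> carrier A" and b: "b \<in> carrier A" "b \<notin> pointwise_stabilizer H"
    and ab: "\<And>j. j < p \<Longrightarrow> a \<otimes>\<^bsub>A\<^esub> b [^]\<^bsub>A\<^esub> j \<notin> pointwise_stabilizer H"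
    using A.exists_translates_outside_subgroup[OF finite_A
        subgroup_pointwise_stabilizer[OF H_subset] small prime_gt_0_nat[OF prime_p]]
    by blast
  have "derived G H = H"
    using a b ab
    by (intro derived_eq_if_commutators_full[OF finite_G prime_p A_exponent a b(1)] full) auto
  then show ?thesis
    using G.perfect_subgroup_trivial[OF solvable_G subgroup_H] by blast
qed

lemma invariant_subset_centralizer_hull:
  assumes "invariant H"
  shows "H \<subseteq> centralizer_hull"
proof -
  have "finite H"
    using invariant_subset[OF assms] finite_G by (rule finite_subset)
  then show ?thesis
    using assms
  proof (induction H rule: finite_psubset_induct)
    case (psubset H)
    let ?T = "pointwise_stabilizer H"
    show ?case
    proof (cases "card (carrier A) \<le> p * card ?T")
      case True
      then have "?T \<in> large_subgroups"
        using subgroup_pointwise_stabilizer[OF invariant_subset[OF psubset.prems]]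
        by (simp add: large_subgroups_def)
      moreover have "H \<subseteq> fixed_points G phi ?T (carrier G)"
        using invariant_subset[OF psubset.prems]
        by (auto simp: fixed_points_def pointwise_stabilizer_def)
      ultimately show ?thesis
        unfolding centralizer_hull_def by (blast intro: generate.incl)
    next
      case False
      show ?thesis
      proof (rule ccontr)
        assume "\<not> H \<subseteq> centralizer_hull"
        then have "H = {\<one>\<^bsub>G\<^esub>}"
          using False subset_centralizer_hull_or_commutator_full[OF psubset.prems psubset.IH]
          by (intro trivial_if_commutators_full[OF psubset.prems]) auto
        then show False
          using \<open>\<not> H \<subseteq> centralizer_hull\<close> subgroup.one_closed[OF subgroup_centralizer_hull]
          by simp
      qed
    qed
  qed
qed

end

theorem lemma3p1:
  fixes G :: "('a, 'c) monoid_scheme" and A :: "('b, 'd) monoid_scheme"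
    and phi :: "'b \<Rightarrow> 'a \<Rightarrow> 'a" and p :: nat
  assumes "group G" and "finite (carrier G)" and "solvable G"
    and "comm_group A" and "finite (carrier A)" and "Factorial_Ring.prime p"
    and "\<forall>a \<in> carrier A. a [^]\<^bsub>A\<^esub> p = \<one>\<^bsub>A\<^esub>"
    and "card (carrier A) \<ge> p ^ 3"
    and "phi \<in> hom A (AutoGroup G)"
    and "good_action G A phi"
    and "\<forall>a \<in> carrier A. a \<noteq> \<one>\<^bsub>A\<^esub> \<longrightarrow>
           comm_group (G\<lparr>carrier := fixed_points G phi {a} (carrier G)\<rparr>)"
  shows "comm_group G"
proof -
  interpret good_elementary_action G A phi p
    by (intro good_elementary_action.intro good_elementary_action_axioms.intro aut_action.intro
        aut_action_axioms.intro) (use assms in auto)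
  show ?thesis
    using invariant_subset_centralizer_hull[OF invariant_carrier] centralizer_hull_commute
    by (intro G.group_comm_groupI) auto
qed

end
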